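(* Let $\Pi=(P,\mathcal{L})$ and $\Pi'=(P',\mathcal{L}')$ be $n$-dimensional linear spaces, $n\ge 4$, both satisfying the exchange axiom and the axiom (P2). If $f:\mathcal{L}\to\mathcal{L}'$ is an injection sending every base subset of $\mathcal{G}_1(\Pi)=\mathcal{L}$ to a base subset of $\mathcal{G}_1(\Pi')=\mathcal{L}'$, then there is a strong embedding $g$ of $\Pi$ to $\Pi'$ such that $f(L)=\overline{g(L)}$ for every line $L\in\mathcal{L}$.
   Context: A linear space $\Pi=(P,\mathcal{L})$ is a set $P$ of points with a family $\mathcal{L}$ of proper subsets (lines) such that each line has at least two points and any two distinct points $p,q$ lie on exactly one line $pq$. Points are collinear if some line contains them. A subspace is a set $S\subset P$ with $pq\subset S$ for all distinct $p,q\in S$; $\overline{X}$ is the smallest subspace containing $X$. A set $X$ is independent if $\overline{X}$ is not spanned by a proper subset of $X$; a base of a subspace $S$ is an independent set spanning $S$. A subspace is $m$-dimensional if $m+1$ is the smallest number of points spanning it. Exchange axiom: for every $X\subset P$ and $p_1,p_2\in P\setminus\overline{X}$, $p_2\in\overline{X\cup\{p_1\}}$ implies $p_1\in\overline{X\cup\{p_2\}}$. Axiom (P2): every line contains at least three points. $\mathcal{G}_k(\Pi)$ is the set of $k$-dimensional subspaces. For a base $B$ of $\Pi$, the base subset of $\mathcal{G}_k(\Pi)$ associated with $B$ is the set of all $k$-dimensional subspaces spanned by points of $B$. A strong embedding of $\Pi$ to $\Pi'$ is an injection $g:P\to P'$ sending collinear triples to collinear triples, non-collinear triples to non-collinear triples,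 and independent sets to independent sets. *)

theory Defs
  imports Main
begin

definition linear_space :: "'a set \<Rightarrow> 'a set set \<Rightarrow> bool" where
  "linear_space P L \<longleftrightarrow>
     (\<forall>l\<in>L. l \<subset> P \<and> (\<exists>p q. p \<in> l \<and> q \<in> l \<and> p \<noteq> q)) \<and>
     (\<forall>p\<in>P. \<forall>q\<in>P. p \<noteq> q \<longrightarrow> (\<exists>!l. l \<in> L \<and> p \<in> l \<and> q \<in> l))"

definition collinear_in :: "'a set set \<Rightarrow> 'a set \<Rightarrow> bool" where
  "collinear_in L X \<longleftrightarrow> (\<exists>l\<in>L. X \<subseteq> l)"

definition subspace :: "'a set \<Rightarrow> 'a set set \<Rightarrow> 'a set \<Rightarrow> bool" where
  "subspace P L S \<longleftrightarrow> S \<subseteq> P \<and>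
     (\<forall>p\<in>S. \<forall>q\<in>S. p \<noteq> q \<longrightarrow> (\<forall>l\<in>L. p \<in> l \<and> q \<in> l \<longrightarrow> l \<subseteq> S))"

definition span :: "'a set \<Rightarrow> 'a set set \<Rightarrow> 'a set \<Rightarrow> 'a set" where
  "span P L X = \<Inter> {S. subspace P L S \<and> X \<subseteq> S}"

definition independent :: "'a set \<Rightarrow> 'a set set \<Rightarrow> 'a set \<Rightarrow> bool" where
  "independent P L X \<longleftrightarrow> X \<subseteq> P \<and> (\<forall>Y. Y \<subset> X \<longrightarrow> span P L Y \<noteq> span P L X)"

definition is_base :: "'a set \<Rightarrow> 'a set set \<Rightarrow> 'a set \<Rightarrow> 'a set \<Rightarrow> bool" where
  "is_base P L S B \<longleftrightarrow> independent P L B \<and> span P L B = S"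

definition is_dim :: "'a set \<Rightarrow> 'a set set \<Rightarrow> 'a set \<Rightarrow> nat \<Rightarrow> bool" where
  "is_dim P L S m \<longleftrightarrow> subspace P L S \<and>
     (\<exists>X. finite X \<and> X \<subseteq> P \<and> card X = m + 1 \<and> span P L X = S) \<and>
     (\<forall>X. finite X \<and> X \<subseteq> P \<and> span P L X = S \<longrightarrow> m + 1 \<le> card X)"

definition Grass :: "'a set \<Rightarrow> 'a set set \<Rightarrow> nat \<Rightarrow> 'a set set" where
  "Grass P L k = {S. is_dim P L S k}"

definition base_subset :: "'a set \<Rightarrow> 'a set set \<Rightarrow> nat \<Rightarrow> 'a set \<Rightarrow> 'a set set" where
  "base_subset P L k B = {S \<in> Grass P L k. \<exists>X. X \<subseteq> B \<and> span P L X = S}"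

definition exchange_axiom :: "'a set \<Rightarrow> 'a set set \<Rightarrow> bool" where
  "exchange_axiom P L \<longleftrightarrow>
     (\<forall>X p1 p2. X \<subseteq> P \<longrightarrow> p1 \<in> P - span P L X \<longrightarrow> p2 \<in> P - span P L X \<longrightarrow>
        p2 \<in> span P L (X \<union> {p1}) \<longrightarrow> p1 \<in> span P L (X \<union> {p2}))"

definition axiom_P2 :: "'a set set \<Rightarrow> bool" where
  "axiom_P2 L \<longleftrightarrow> (\<forall>l\<in>L. \<exists>a b c. a \<in> l \<and> b \<in> l \<and> c \<in> l \<and> a \<noteq> b \<and> a \<noteq> c \<and> b \<noteq> c)"

definition strong_embedding ::
  "'a set \<Rightarrow> 'a set set \<Rightarrow> 'b set \<Rightarrow> 'b set set \<Rightarrow> ('a \<Rightarrow> 'b) \<Rightarrow> bool" where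
  "strong_embedding P L P' L' g \<longleftrightarrow>
     inj_on g P \<and> g ` P \<subseteq> P' \<and>
     (\<forall>x\<in>P. \<forall>y\<in>P. \<forall>z\<in>P. x \<noteq> y \<and> x \<noteq> z \<and> y \<noteq> z \<longrightarrow>
        (collinear_in L {x, y, z} \<longrightarrow> collinear_in L' {g x, g y, g z}) \<and>
        (\<not> collinear_in L {x, y, z} \<longrightarrow> \<not> collinear_in L' {g x, g y, g z})) \<and>
     (\<forall>X. independent P L X \<longrightarrow> independent P' L' (g ` X))"

end

theory Submission
  imports Defs
begin

(*
  For a base B, the lines spanned by two points of B form its base subset of lines.  Exchanging
  b \<in> B for a suitable point, found with (P2), gives a second base whose line set meets that of
  B exactly in the lines of B - {b}; conversely, for n \<ge> 4 a count shows that two bases sharing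
  (n choose 2) but not all of their lines are related in this way.  Hence f maps the star of b in
  B (the lines joining b to the other points of B) onto the star of a point b' of the image base.
  Comparing bases through b shows that b' lies on the image of every line through b, so b' = g b
  depends on b alone; g sends bases into bases, which makes it a strong embedding, and f l is the
  line spanned by g ` l.
*)

definition lines_of :: "'a set \<Rightarrow> 'a set set \<Rightarrow> 'a set \<Rightarrow> 'a set set" where
  "lines_of P L X = span P L ` {A. A \<subseteq> X \<and> card A = 2}"

definition star :: "'a set \<Rightarrow> 'a set set \<Rightarrow> 'a set \<Rightarrow> 'a \<Rightarrow> 'a set set" where
  "star P L X b = {span P L {b, s} | s. s \<in> X - {b}}"

locale linspace =
  fixes P :: "'a set" and L :: "'a set set"
  assumes linear_space: "linear_space P L"
begin

lemma line_subset: "l \<in> L \<Longrightarrow> l \<subseteq> P"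
  using linear_space unfolding linear_space_def by blast

lemma line_two_points: "l \<in> L \<Longrightarrow> \<exists>p q. p \<in> l \<and> q \<in> l \<and> p \<noteq> q"
  using linear_space unfolding linear_space_def by blast

lemma ex1_line: "p \<in> P \<Longrightarrow> q \<in> P \<Longrightarrow> p \<noteq> q \<Longrightarrow> \<exists>!l. l \<in> L \<and> p \<in> l \<and> q \<in> l"
  using linear_space unfolding linear_space_def by simp

lemma line_eqI:
  assumes "l1 \<in> L" "l2 \<in> L" "p \<in> l1" "p \<in> l2" "q \<in> l1" "q \<in> l2" "p \<noteq> q"
  shows "l1 = l2"
proof -
  have "p \<in> P" "q \<in> P" using line_subset assms by blast+
  with assms show ?thesis using ex1_line[of p q] by (metis (no_types, lifting))
qed

lemma lines_meet_once:
  "l1 \<in> L \<Longrightarrow> l2 \<in> L \<Longrightarrow> l1 \<noteq> l2 \<Longrightarrow> p \<in> l1 \<Longrightarrow> p \<in> l2 \<Longrightarrow> q \<in> l1 \<Longrightarrow> q \<in> l2 \<Longrightarrow> p = q"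
  using line_eqI by blast

lemma line_third_point:
  assumes "axiom_P2 L" "l \<in> L" obtains r where "r \<in> l" "r \<noteq> x" "r \<noteq> y"
  using assms unfolding axiom_P2_def by metis

lemma subspace_P: "subspace P L P"
  unfolding subspace_def using line_subset by blast

lemma subspace_line: "l \<in> L \<Longrightarrow> subspace P L l"
  unfolding subspace_def using line_subset line_eqI by (metis subset_refl)

lemma subspace_span:
  assumes "X \<subseteq> P" shows "subspace P L (span P L X)"
proof -
  have "span P L X \<subseteq> P" unfolding span_def using subspace_P assms by blast
  moreover have "\<forall>p\<in>span P L X. \<forall>q\<in>span P L X. p \<noteq> q \<longrightarrow>
      (\<forall>l\<in>L. p \<in> l \<and> q \<in> l \<longrightarrow> l \<subseteq> span P L X)"
    unfolding span_def subspace_def by blast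
  ultimately show ?thesis unfolding subspace_def by blast
qed

lemma span_subset_P: "X \<subseteq> P \<Longrightarrow> span P L X \<subseteq> P"
  using subspace_span unfolding subspace_def by blast

lemma span_superset: "X \<subseteq> P \<Longrightarrow> X \<subseteq> span P L X"
  unfolding span_def by blast

lemma span_minimal: "subspace P L S \<Longrightarrow> X \<subseteq> S \<Longrightarrow> span P L X \<subseteq> S"
  unfolding span_def by blast

lemma span_mono: "X \<subseteq> Y \<Longrightarrow> Y \<subseteq> P \<Longrightarrow> span P L X \<subseteq> span P L Y"
  by (meson span_superset span_minimal subspace_span subset_trans)

lemma span_subset_span: "X \<subseteq> span P L Y \<Longrightarrow> Y \<subseteq> P \<Longrightarrow> span P L X \<subseteq> span P L Y"
  by (simp add: span_minimal subspace_span)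

lemma span_empty: "span P L {} = {}"
proof -
  have "subspace P L {}" unfolding subspace_def by blast
  then show ?thesis using span_minimal by blast
qed

lemma span_singleton:
  assumes "p \<in> P" shows "span P L {p} = {p}"
proof -
  have "subspace P L {p}" unfolding subspace_def using assms by blast
  then show ?thesis using span_minimal[of "{p}"] span_superset[of "{p}"] assms by blast
qed

lemma span_subsingleton:
  assumes "X \<subseteq> P" "\<And>x y. x \<in> X \<Longrightarrow> y \<in> X \<Longrightarrow> x = y" shows "span P L X = X"
proof (cases "X = {}")
  case False
  then obtain z where "X = {z}" using assms(2) by blast
  then show ?thesis using span_singleton assms(1) by simp
qed (simp add: span_empty)

lemma line_subset_span:
  assumes "Y \<subseteq> P" "l \<in> L" "p \<in> l" "q \<in> l" "p \<noteq> q" "p \<in> span P L Y" "q \<in> span P L Y"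
  shows "l \<subseteq> span P L Y"
  using subspace_span[OF assms(1)] assms(2-) unfolding subspace_def by blast

lemma line_meets_span_once:
  assumes "Y \<subseteq> P" "l \<in> L" "x \<in> l" "x \<notin> span P L Y"
    and "p \<in> l" "q \<in> l" "p \<in> span P L Y" "q \<in> span P L Y"
  shows "p = q"
  using line_subset_span[OF assms(1,2,5,6) _ assms(7,8)] assms(3,4) by blast

lemma span_pair_line:
  assumes "l \<in> L" "p \<in> l" "q \<in> l" "p \<noteq> q" shows "span P L {p, q} = l"
proof
  show "span P L {p, q} \<subseteq> l" using span_minimal[OF subspace_line] assms by simp
  have "{p, q} \<subseteq> P" using line_subset assms by blast
  then show "l \<subseteq> span P L {p, q}"
    using line_subset_span[of "{p, q}" l p q] span_superset[of "{p, q}"] assms by blast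
qed

lemma span_pair_in_lines: "p \<in> P \<Longrightarrow> q \<in> P \<Longrightarrow> p \<noteq> q \<Longrightarrow> span P L {p, q} \<in> L"
  using ex1_line span_pair_line by metis

lemma independent_iff:
  "independent P L X \<longleftrightarrow> X \<subseteq> P \<and> (\<forall>x\<in>X. x \<notin> span P L (X - {x}))"
proof
  assume indep: "independent P L X"
  then have XP: "X \<subseteq> P" unfolding independent_def by blast
  have "x \<notin> span P L (X - {x})" if "x \<in> X" for x
  proof
    assume "x \<in> span P L (X - {x})"
    then have "X \<subseteq> span P L (X - {x})" using span_superset[of "X - {x}"] XP by blast
    then have "span P L X \<subseteq> span P L (X - {x})" using span_subset_span XP by blast
    moreover have "span P L (X - {x}) \<subseteq> span P L X" using span_mono[of "X - {x}" X] XP by blast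
    moreover have "X - {x} \<subset> X" using that by blast
    ultimately show False using indep unfolding independent_def by blast
  qed
  with XP show "X \<subseteq> P \<and> (\<forall>x\<in>X. x \<notin> span P L (X - {x}))" by blast
next
  assume X: "X \<subseteq> P \<and> (\<forall>x\<in>X. x \<notin> span P L (X - {x}))"
  have "span P L Y \<noteq> span P L X" if "Y \<subset> X" for Y
  proof
    assume eq: "span P L Y = span P L X"
    obtain x where x: "x \<in> X" "x \<notin> Y" using \<open>Y \<subset> X\<close> by blast
    then have "Y \<subseteq> X - {x}" using \<open>Y \<subset> X\<close> by blast
    then have "span P L Y \<subseteq> span P L (X - {x})" using span_mono[of Y "X - {x}"] X by blast
    moreover have "x \<in> span P L X" using span_superset X x by blast
    ultimately show False using X x eq by blast
  qed
  with X show "independent P L X" unfolding independent_def by blast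
qed

lemma independent_subset_P: "independent P L X \<Longrightarrow> X \<subseteq> P"
  unfolding independent_def by blast

lemma independent_mono:
  assumes "independent P L X" "Y \<subseteq> X" shows "independent P L Y"
proof -
  have XP: "X \<subseteq> P" using assms(1) independent_subset_P by blast
  have "y \<notin> span P L (Y - {y})" if "y \<in> Y" for y
  proof
    assume "y \<in> span P L (Y - {y})"
    moreover have "span P L (Y - {y}) \<subseteq> span P L (X - {y})"
      using span_mono[of "Y - {y}" "X - {y}"] assms(2) XP by blast
    ultimately show False using assms that independent_iff by blast
  qed
  then show ?thesis unfolding independent_iff using XP assms(2) by blast
qed

lemma independent_mem_span:
  assumes "independent P L X" "A \<subseteq> X" "x \<in> X" "x \<in> span P L A" shows "x \<in> A"
proof (rule ccontr)
  assume "x \<notin> A"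
  then have "A \<subseteq> X - {x}" using assms(2) by blast
  then have "span P L A \<subseteq> span P L (X - {x})"
    using span_mono independent_subset_P[OF assms(1)] by blast
  then show False using assms independent_iff by blast
qed

lemma independent_mem_span_pair:
  assumes "independent P L X" "x \<in> X" "y \<in> X" "z \<in> X" "z \<in> span P L {x, y}"
  shows "z = x \<or> z = y"
  using independent_mem_span[of X "{x, y}" z] assms by blast

lemma independent_singleton: "p \<in> P \<Longrightarrow> independent P L {p}"
  unfolding independent_iff using span_empty by auto

lemma independent_pair:
  assumes "p \<in> P" "q \<in> P" "p \<noteq> q" shows "independent P L {p, q}"
proof -
  have "{p, q} - {q} = {p}" "{p, q} - {p} = {q}" using assms(3) by blast+
  then show ?thesis unfolding independent_iff using span_singleton assms by auto
qed

lemma independent_iff_not_collinear: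
  assumes "x \<in> P" "y \<in> P" "z \<in> P" "x \<noteq> y" "x \<noteq> z" "y \<noteq> z"
  shows "independent P L {x, y, z} \<longleftrightarrow> \<not> collinear_in L {x, y, z}"
proof
  assume indep: "independent P L {x, y, z}"
  show "\<not> collinear_in L {x, y, z}"
  proof
    assume "collinear_in L {x, y, z}"
    then obtain l where "l \<in> L" "{x, y, z} \<subseteq> l" unfolding collinear_in_def by blast
    then have "z \<in> span P L {x, y}" using span_pair_line assms(4) by simp
    then show False using independent_mem_span_pair[OF indep] assms by blast
  qed
next
  assume noncol: "\<not> collinear_in L {x, y, z}"
  have off_line: "w \<notin> span P L {u, v}"
    if "u \<in> P" "v \<in> P" "u \<noteq> v" "\<not> collinear_in L {u, v, w}" for u v w
  proof
    assume "w \<in> span P L {u, v}"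
    then have "{u, v, w} \<subseteq> span P L {u, v}" using span_superset[of "{u, v}"] that(1,2) by blast
    then show False using that span_pair_in_lines unfolding collinear_in_def by blast
  qed
  have "x \<notin> span P L {y, z}" "y \<notin> span P L {x, z}" "z \<notin> span P L {x, y}"
    using off_line[of y z x] off_line[of x z y] off_line[of x y z] noncol assms
    by (simp_all add: insert_commute)
  moreover have "{x, y, z} - {x} = {y, z}" "{x, y, z} - {y} = {x, z}" "{x, y, z} - {z} = {x, y}"
    using assms by blast+
  ultimately show "independent P L {x, y, z}" unfolding independent_iff using assms by auto
qed

lemma mem_lines_of:
  "l \<in> lines_of P L X \<longleftrightarrow> (\<exists>x y. x \<in> X \<and> y \<in> X \<and> x \<noteq> y \<and> l = span P L {x, y})"
  unfolding lines_of_def by (auto simp: card_2_iff)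

lemma lines_of_mono: "X \<subseteq> Y \<Longrightarrow> lines_of P L X \<subseteq> lines_of P L Y"
  unfolding lines_of_def by blast

lemma lines_of_subset_lines: "X \<subseteq> P \<Longrightarrow> lines_of P L X \<subseteq> L"
  unfolding mem_lines_of subset_iff using span_pair_in_lines by blast

lemma finite_lines_of: "finite X \<Longrightarrow> finite (lines_of P L X)"
  unfolding lines_of_def by simp

lemma independent_span_pair_inj:
  assumes "independent P L X" "A \<subseteq> X" "A' \<subseteq> X" "card A = 2" "card A' = 2"
    and "span P L A = span P L A'"
  shows "A = A'"
proof -
  have "A' \<subseteq> span P L A'" using span_superset assms(3) independent_subset_P[OF assms(1)] by blast
  then have "A' \<subseteq> A" using independent_mem_span[OF assms(1,2)] assms(3,6) by blast
  moreover have "finite A" using assms(4) by (intro card_ge_0_finite) simp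
  ultimately show ?thesis using card_subset_eq assms(4,5) by metis
qed

lemma card_lines_of:
  assumes "independent P L X" "finite X" shows "card (lines_of P L X) = card X choose 2"
proof -
  have "inj_on (span P L) {A. A \<subseteq> X \<and> card A = 2}"
    using independent_span_pair_inj[OF assms(1)] by (intro inj_onI) blast
  then have "card (lines_of P L X) = card {A. A \<subseteq> X \<and> card A = 2}"
    unfolding lines_of_def by (rule card_image)
  also have "\<dots> = card X choose 2" using n_subsets[OF assms(2)] by simp
  finally show ?thesis .
qed

lemma lines_of_diff_eq_star:
  assumes indep: "independent P L X" and b: "b \<in> X"
  shows "lines_of P L X - lines_of P L (X - {b}) = star P L X b"
proof
  show "lines_of P L X - lines_of P L (X - {b}) \<subseteq> star P L X b"
  proof
    fix l assume l: "l \<in> lines_of P L X - lines_of P L (X - {b})"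
    then obtain x y where xy: "x \<in> X" "y \<in> X" "x \<noteq> y" "l = span P L {x, y}"
      using mem_lines_of by blast
    then have "x = b \<or> y = b" using l mem_lines_of[of l "X - {b}"] by blast
    with xy show "l \<in> star P L X b" unfolding star_def by (auto simp: insert_commute)
  qed
next
  show "star P L X b \<subseteq> lines_of P L X - lines_of P L (X - {b})"
  proof
    fix l assume "l \<in> star P L X b"
    then obtain s where s: "s \<in> X" "s \<noteq> b" "l = span P L {b, s}" unfolding star_def by blast
    then have "l \<in> lines_of P L X" using b mem_lines_of by blast
    moreover have "l \<notin> lines_of P L (X - {b})"
    proof
      assume "l \<in> lines_of P L (X - {b})"
      then obtain A where "A \<subseteq> X - {b}" "card A = 2" "l = span P L A"
        unfolding lines_of_def by blast
      moreover have "{b, s} = A"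
        using independent_span_pair_inj[OF indep, of "{b, s}" A] calculation s b by auto
      ultimately show False by blast
    qed
    ultimately show "l \<in> lines_of P L X - lines_of P L (X - {b})" by blast
  qed
qed

lemma star_eq_imp_eq:
  assumes indep: "independent P L X" and "p \<in> X" "q \<in> X" "r \<in> X" "r \<noteq> p" "r \<noteq> q"
    and "star P L X p = star P L X q"
  shows "p = q"
proof -
  have "span P L {p, r} \<in> star P L X q" using assms unfolding star_def by blast
  then obtain t where "t \<in> X" "span P L {p, r} = span P L {q, t}" unfolding star_def by blast
  moreover have "q \<in> span P L {q, t}"
    using span_superset[of "{q, t}"] independent_subset_P[OF indep] assms(3) \<open>t \<in> X\<close> by blast
  ultimately show ?thesis using independent_mem_span_pair[OF indep] assms by metis
qed

lemma lines_of_meet_in: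
  assumes C: "independent P L C" and l: "l1 \<in> lines_of P L C" "l2 \<in> lines_of P L C" "l1 \<noteq> l2"
    and x: "x \<in> l1" "x \<in> l2"
  shows "x \<in> C"
proof (rule ccontr)
  assume "x \<notin> C"
  have CP: "C \<subseteq> P" using independent_subset_P[OF C] .
  obtain c1 c2 where c12: "c1 \<in> C" "c2 \<in> C" "c1 \<noteq> c2" "l1 = span P L {c1, c2}"
    using l(1) mem_lines_of by blast
  obtain c3 c4 where c34: "c3 \<in> C" "c4 \<in> C" "c3 \<noteq> c4" "l2 = span P L {c3, c4}"
    using l(2) mem_lines_of by blast
  have lines: "l1 \<in> L" "l2 \<in> L" using lines_of_subset_lines[OF CP] l by blast+
  have "c1 \<in> l1" "c2 \<in> l1" "c3 \<in> l2" "c4 \<in> l2"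
    using c12 c34 span_superset[of "{c1, c2}"] span_superset[of "{c3, c4}"] CP by auto
  define T where "T = {c1, c3, c4}"
  have TP: "T \<subseteq> P" "T \<subseteq> C" using T_def c12 c34 CP by auto
  have "l2 \<subseteq> span P L T" using c34(4) span_mono[OF _ TP(1)] T_def by blast
  moreover have "c1 \<in> span P L T" using span_superset[OF TP(1)] T_def by blast
  ultimately have "l1 \<subseteq> span P L T"
    using line_subset_span[OF TP(1) lines(1) \<open>c1 \<in> l1\<close> x(1)] x \<open>x \<notin> C\<close> c12(1) by blast
  then have "c2 \<in> T" using independent_mem_span[OF C TP(2) c12(2)] \<open>c2 \<in> l1\<close> by blast
  then have "c2 \<in> l2" using T_def c12(3) \<open>c3 \<in> l2\<close> \<open>c4 \<in> l2\<close> by blast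
  then show False using line_eqI[OF lines \<open>c2 \<in> l1\<close> _ x] \<open>x \<notin> C\<close> c12(2) l(3) by blast
qed

lemma card_lines_of_through_le_one:
  assumes "independent P L C" "x \<notin> C" shows "card {l \<in> lines_of P L C. x \<in> l} \<le> 1"
proof -
  have "l1 = l2" if "l1 \<in> {l \<in> lines_of P L C. x \<in> l}" "l2 \<in> {l \<in> lines_of P L C. x \<in> l}" for l1 l2
    using lines_of_meet_in[OF assms(1), of l1 l2 x] that assms(2) by blast
  then show ?thesis
    using card_le_Suc0_iff_eq[of "{l \<in> lines_of P L C. x \<in> l}"] by (cases "finite {l \<in> lines_of P L C. x \<in> l}") auto
qed

lemma Grass_1_eq_lines: "Grass P L 1 = L"
proof (intro set_eqI iffI)
  fix S assume "S \<in> Grass P L 1"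
  then have "\<exists>X. finite X \<and> X \<subseteq> P \<and> card X = 1 + 1 \<and> span P L X = S"
    unfolding Grass_def is_dim_def by (simp only: mem_Collect_eq)
  then obtain X where X: "X \<subseteq> P" "card X = 2" "span P L X = S" by auto
  then obtain x y where "X = {x, y}" "x \<noteq> y" by (meson card_2_iff)
  with X have "x \<in> P" "y \<in> P" "x \<noteq> y" "span P L {x, y} = S" by auto
  then show "S \<in> L" using span_pair_in_lines by blast
next
  fix l assume l: "l \<in> L"
  then obtain p q where pq: "p \<in> l" "q \<in> l" "p \<noteq> q" using line_two_points by blast
  then have pqP: "{p, q} \<subseteq> P" using line_subset l by blast
  have "1 + 1 \<le> card X" if X: "finite X" "X \<subseteq> P" "span P L X = l" for X
  proof (rule ccontr)
    assume "\<not> 1 + 1 \<le> card X"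
    then have X_sub: "x = y" if "x \<in> X" "y \<in> X" for x y
      using that X(1) card_le_Suc0_iff_eq[of X] by simp
    then have "l = X" using span_subsingleton X by simp
    with pq X_sub show False by blast
  qed
  moreover have "\<exists>X. finite X \<and> X \<subseteq> P \<and> card X = 1 + 1 \<and> span P L X = l"
    using span_pair_line[OF l pq] pqP pq(3) by (intro exI[of _ "{p, q}"]) simp
  ultimately show "l \<in> Grass P L 1"
    unfolding Grass_def is_dim_def using subspace_line[OF l] by simp
qed

lemma base_subset_1_eq_lines_of:
  assumes indep: "independent P L B" shows "base_subset P L 1 B = lines_of P L B"
proof
  have BP: "B \<subseteq> P" using independent_subset_P[OF indep] .
  show "lines_of P L B \<subseteq> base_subset P L 1 B"
  proof
    fix l assume "l \<in> lines_of P L B"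
    then obtain A where "A \<subseteq> B" "span P L A = l" unfolding lines_of_def by blast
    moreover have "l \<in> L" using lines_of_subset_lines[OF BP] \<open>l \<in> lines_of P L B\<close> by blast
    ultimately show "l \<in> base_subset P L 1 B" unfolding base_subset_def Grass_1_eq_lines by blast
  qed
  show "base_subset P L 1 B \<subseteq> lines_of P L B"
  proof
    fix S assume "S \<in> base_subset P L 1 B"
    then obtain X where S: "S \<in> L" "X \<subseteq> B" "span P L X = S"
      unfolding base_subset_def Grass_1_eq_lines by blast
    have XP: "X \<subseteq> P" using S(2) BP by blast
    obtain u v where uv: "u \<in> S" "v \<in> S" "u \<noteq> v" using line_two_points S(1) by blast
    have "\<not> (\<forall>x\<in>X. \<forall>y\<in>X. x = y)"
    proof
      assume "\<forall>x\<in>X. \<forall>y\<in>X. x = y"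
      then have "S = X" using span_subsingleton[OF XP] S(3) by simp
      with uv \<open>\<forall>x\<in>X. \<forall>y\<in>X. x = y\<close> show False by blast
    qed
    then obtain x y where xy: "x \<in> X" "y \<in> X" "x \<noteq> y" by blast
    have "X \<subseteq> S" using span_superset[OF XP] S(3) by blast
    then have line: "span P L {x, y} = S" using span_pair_line[OF S(1)] xy by blast
    have "X \<subseteq> {x, y}"
    proof
      fix z assume "z \<in> X"
      then have "z \<in> span P L {x, y}" using line \<open>X \<subseteq> S\<close> by blast
      then show "z \<in> {x, y}"
        using independent_mem_span_pair[OF indep, of x y z] xy \<open>z \<in> X\<close> S(2) by blast
    qed
    then have "X = {x, y}" using xy by blast
    with S xy show "S \<in> lines_of P L B" unfolding mem_lines_of by blast
  qed
qed

lemma star_line_in_plane: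
  assumes B: "independent P L B" and pts: "b \<in> B" "s1 \<in> B" "s2 \<in> B"
    and l: "l \<in> star P L B b" "p \<in> l" "p \<noteq> b" "p \<in> span P L {b, s1, s2}"
  shows "l = span P L {b, s1} \<or> l = span P L {b, s2}"
proof -
  have BP: "B \<subseteq> P" using independent_subset_P[OF B] .
  obtain s where s: "s \<in> B" "s \<noteq> b" "l = span P L {b, s}" using l(1) unfolding star_def by blast
  have "l \<in> L" "b \<in> l" "s \<in> l"
    using s span_pair_in_lines span_superset[of "{b, s}"] BP pts(1) by auto
  define T where "T = {b, s1, s2}"
  have TP: "T \<subseteq> P" "T \<subseteq> B" using T_def BP pts by auto
  have "b \<in> span P L T" using span_superset[OF TP(1)] T_def by auto
  then have "l \<subseteq> span P L T"
    using line_subset_span[OF TP(1) \<open>l \<in> L\<close> \<open>b \<in> l\<close> l(2) l(3)[symmetric]] l(4) T_def by blast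
  then have "s \<in> T" using independent_mem_span[OF B TP(2) s(1)] \<open>s \<in> l\<close> by blast
  then show ?thesis using s(2,3) T_def by blast
qed

lemma transversal_point_off_star:
  assumes B: "independent P L B" and b: "b \<in> B"
    and s: "s1 \<in> B" "s2 \<in> B" "s1 \<noteq> b" "s2 \<noteq> b" "s1 \<noteq> s2"
    and q: "q \<in> span P L {b, s1}" "q \<noteq> b"
    and p: "p \<in> span P L {q, s2}" "p \<noteq> q" "p \<noteq> s2"
    and l: "l \<in> star P L B b"
  shows "p \<notin> l"
proof
  assume "p \<in> l"
  have BP: "B \<subseteq> P" using independent_subset_P[OF B] .
  have pts: "b \<in> P" "s1 \<in> P" "s2 \<in> P" using BP b s by blast+
  define l1 where "l1 = span P L {b, s1}"
  define l2 where "l2 = span P L {q, s2}"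
  have l1: "l1 \<in> L" "b \<in> l1" "s1 \<in> l1" "q \<in> l1" "s2 \<notin> l1"
    unfolding l1_def using span_pair_in_lines span_superset[of "{b, s1}"] pts s(3) q(1)
      independent_mem_span_pair[OF B b s(1,2)] s by auto
  have "q \<in> P" using l1(1,4) line_subset by blast
  have l2: "l2 \<in> L" "q \<in> l2" "s2 \<in> l2" "p \<in> l2"
    unfolding l2_def using span_pair_in_lines span_superset[of "{q, s2}"] \<open>q \<in> P\<close> pts(3) l1(4,5) p(1)
    by auto
  have b_off_l2: "b \<notin> l2"
    using lines_meet_once[OF l1(1) l2(1) _ l1(2) _ l1(4) l2(2)] l1(5) l2(3) q(2) by blast
  have TP: "{b, s1, s2} \<subseteq> P" using pts by blast
  have "{q, s2} \<subseteq> span P L {b, s1, s2}"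
    using span_mono[of "{b, s1}" "{b, s1, s2}"] span_superset[OF TP] TP q(1) by blast
  then have "p \<in> span P L {b, s1, s2}" using span_subset_span[OF _ TP] p(1) by blast
  moreover have "p \<noteq> b" using b_off_l2 l2(4) by blast
  ultimately consider "l = l1" | "l = span P L {b, s2}"
    using star_line_in_plane[OF B b s(1,2) l \<open>p \<in> l\<close>] l1_def by blast
  then show False
  proof cases
    case 1
    then show False using lines_meet_once[OF l1(1) l2(1) _ _ l2(4) l1(4) l2(2)] \<open>p \<in> l\<close> p(2) l1(5) l2(3)
      by blast
  next
    case 2
    then have "l \<in> L" "b \<in> l" "s2 \<in> l" using span_pair_in_lines span_superset[of "{b, s2}"] pts s(4) by auto
    then have "l = l2" using line_eqI[OF _ l2(1) \<open>p \<in> l\<close> l2(4) _ l2(3) p(3)] by blast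
    then show False using \<open>b \<in> l\<close> b_off_l2 by simp
  qed
qed

lemma exists_point_off_star:
  assumes P2: "axiom_P2 L" and B: "independent P L B" and b: "b \<in> B"
    and s: "s1 \<in> B" "s2 \<in> B" "s1 \<noteq> b" "s2 \<noteq> b" "s1 \<noteq> s2"
  obtains p where "p \<in> P" "p \<notin> span P L (B - {b})" "\<forall>l\<in>star P L B b. p \<notin> l"
proof -
  have BP: "B \<subseteq> P" using independent_subset_P[OF B] .
  have SP: "B - {b} \<subseteq> P" using BP by blast
  have b_off: "b \<notin> span P L (B - {b})" using B b independent_iff by blast
  have s_in: "s1 \<in> span P L (B - {b})" "s2 \<in> span P L (B - {b})"
    using span_superset[OF SP] s by blast+
  define l1 where "l1 = span P L {b, s1}"
  have pts: "b \<in> P" "s1 \<in> P" "s2 \<in> P" using BP b s by blast+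
  have l1: "l1 \<in> L" "b \<in> l1" "s1 \<in> l1"
    unfolding l1_def using span_pair_in_lines span_superset[of "{b, s1}"] pts s(3) by auto
  \<comment> \<open>p is a third point on the line through s2 and a third point q of the line b s1:
      it lies in the plane b s1 s2 but on none of the lines b s1, b s2, s1 s2.\<close>
  obtain q where q: "q \<in> l1" "q \<noteq> b" "q \<noteq> s1" using line_third_point[OF P2 l1(1)] by blast
  have q_off: "q \<notin> span P L (B - {b})"
    using line_meets_span_once[OF SP l1(1,2) b_off q(1) l1(3) _ s_in(1)] q(3) by blast
  have "q \<in> P" using q(1) l1(1) line_subset by blast
  define l2 where "l2 = span P L {q, s2}"
  have l2: "l2 \<in> L" "q \<in> l2" "s2 \<in> l2"
    unfolding l2_def using span_pair_in_lines span_superset[of "{q, s2}"] \<open>q \<in> P\<close> pts(3) q_off s_in(2)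
    by auto
  obtain p where p: "p \<in> l2" "p \<noteq> q" "p \<noteq> s2" using line_third_point[OF P2 l2(1)] by blast
  have "p \<in> P" using p(1) l2(1) line_subset by blast
  moreover have "p \<notin> span P L (B - {b})"
    using line_meets_span_once[OF SP l2(1,2) q_off p(1) l2(3) _ s_in(2)] p(3) by blast
  moreover have "\<forall>l\<in>star P L B b. p \<notin> l"
    using transversal_point_off_star[OF B b s _ q(2) _ p(2,3)] q(1) p(1) l1_def l2_def by blast
  ultimately show ?thesis by (rule that)
qed

lemma common_lines_after_exchange:
  assumes B: "independent P L B" and b: "b \<in> B"
    and C: "independent P L (insert p (B - {b}))" and p: "p \<notin> B" "\<forall>l\<in>star P L B b. p \<notin> l"
  shows "lines_of P L B \<inter> lines_of P L (insert p (B - {b})) = lines_of P L (B - {b})"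
proof
  show "lines_of P L (B - {b}) \<subseteq> lines_of P L B \<inter> lines_of P L (insert p (B - {b}))"
    using lines_of_mono by (metis Diff_subset Int_greatest subset_insertI)
  show "lines_of P L B \<inter> lines_of P L (insert p (B - {b})) \<subseteq> lines_of P L (B - {b})"
  proof
    fix l assume l: "l \<in> lines_of P L B \<inter> lines_of P L (insert p (B - {b}))"
    show "l \<in> lines_of P L (B - {b})"
    proof (rule ccontr)
      assume "l \<notin> lines_of P L (B - {b})"
      then have "l \<in> star P L B b" using l lines_of_diff_eq_star[OF B b] by blast
      have "insert p (B - {b}) - {p} = B - {b}" using p(1) by blast
      then have "l \<in> star P L (insert p (B - {b})) p"
        using l \<open>l \<notin> lines_of P L (B - {b})\<close> lines_of_diff_eq_star[OF C, of p] by auto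
      then obtain t where "t \<in> P" "l = span P L {p, t}"
        unfolding star_def using independent_subset_P[OF C] by blast
      then have "p \<in> l" using span_superset[of "{p, t}"] independent_subset_P[OF C] by auto
      with p(2) \<open>l \<in> star P L B b\<close> show False by blast
    qed
  qed
qed

end

locale exchange_linspace = linspace +
  assumes exchange_axiom: "exchange_axiom P L"
begin

lemma exchange:
  "X \<subseteq> P \<Longrightarrow> p1 \<in> P - span P L X \<Longrightarrow> p2 \<in> P - span P L X \<Longrightarrow>
    p2 \<in> span P L (insert p1 X) \<Longrightarrow> p1 \<in> span P L (insert p2 X)"
  using exchange_axiom unfolding exchange_axiom_def by simp

lemma independent_insert:
  assumes indep: "independent P L X" and p: "p \<in> P" "p \<notin> span P L X"
  shows "independent P L (insert p X)"
proof -
  have XP: "X \<subseteq> P" using indep independent_subset_P by blast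
  have "x \<notin> span P L (insert p X - {x})" if "x \<in> insert p X" for x
  proof (cases "x = p")
    case True
    then show ?thesis using p span_mono[of "insert p X - {p}" X] XP by blast
  next
    case False
    then have x: "x \<in> X" using that by blast
    show ?thesis
    proof
      assume "x \<in> span P L (insert p X - {x})"
      then have "x \<in> span P L (insert p (X - {x}))" using False by (simp add: insert_Diff_if)
      moreover have "x \<notin> span P L (X - {x})" using indep x independent_iff by blast
      moreover have "p \<notin> span P L (X - {x})" using span_mono[of "X - {x}" X] XP p by blast
      ultimately have "p \<in> span P L (insert x (X - {x}))"
        using exchange[of "X - {x}" p x] XP p x by blast
      with p x show False by (simp add: insert_absorb)
    qed
  qed
  then show ?thesis unfolding independent_iff using XP p by blast
qed

lemma base_exchange:
  assumes B: "is_base P L P B" and b: "b \<in> B" and p: "p \<in> P" "p \<notin> span P L (B - {b})"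
  shows "is_base P L P (insert p (B - {b}))" (is "is_base P L P ?C")
proof -
  have BP: "B \<subseteq> P" and spanB: "span P L B = P"
    using B independent_subset_P unfolding is_base_def by blast+
  have indep: "independent P L ?C"
    using independent_insert[OF independent_mono[of B] p] B unfolding is_base_def by blast
  have "b \<notin> span P L (B - {b})" using B b independent_iff unfolding is_base_def by blast
  then have "b \<in> span P L (insert p (B - {b}))"
    using exchange[of "B - {b}" b p] BP b p spanB by (simp add: insert_absorb subset_iff)
  then have "B \<subseteq> span P L ?C" using span_superset[of ?C] BP p by blast
  then have "span P L ?C = P"
    using span_subset_span[of B ?C] span_subset_P[of ?C] spanB BP p by blast
  with indep show ?thesis unfolding is_base_def by blast
qed

lemma independent_card_le_spanning:
  assumes S: "finite S" "S \<subseteq> P" "span P L S = P"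
  shows "finite I \<Longrightarrow> independent P L I \<Longrightarrow> card I \<le> card S"
proof (induction "card (I - S)" arbitrary: I rule: less_induct)
  case less
  show ?case
  proof (cases "I \<subseteq> S")
    case True
    then show ?thesis using card_mono S(1) by blast
  next
    case False
    then obtain x where x: "x \<in> I" "x \<notin> S" by blast
    have IP: "I \<subseteq> P" using less.prems independent_subset_P by blast
    have "\<not> S \<subseteq> span P L (I - {x})"
    proof
      assume "S \<subseteq> span P L (I - {x})"
      then have "span P L S \<subseteq> span P L (I - {x})" using span_subset_span IP by blast
      then show False using less.prems(2) x IP S(3) independent_iff by blast
    qed
    then obtain s where s: "s \<in> S" "s \<notin> span P L (I - {x})" by blast
    have "s \<notin> I" using s x span_superset[of "I - {x}"] IP by blast
    have indep: "independent P L (insert s (I - {x}))"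
      using independent_insert[OF independent_mono[OF less.prems(2)]] s S(2) by blast
    have card_eq: "card (insert s (I - {x})) = card I"
      using \<open>s \<notin> I\<close> x less.prems(1) by (metis card_Suc_Diff1 card_insert_disjoint finite_Diff Diff_iff)
    have "insert s (I - {x}) - S = (I - S) - {x}" using s(1) by blast
    then have "card (insert s (I - {x}) - S) < card (I - S)"
      using x less.prems(1) by (metis DiffI card_Diff1_less finite_Diff)
    from less.hyps[OF this] less.prems(1) indep card_eq show ?thesis by simp
  qed
qed

lemma independent_extend_to_base:
  assumes S: "finite S" "S \<subseteq> P" "span P L S = P"
  shows "independent P L I \<Longrightarrow> \<exists>Y\<subseteq>S. Y \<inter> I = {} \<and> is_base P L P (I \<union> Y)"
proof (induction "card (S - I)" arbitrary: I rule: less_induct)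
  case less
  have IP: "I \<subseteq> P" using less.prems independent_subset_P by blast
  show ?case
  proof (cases "S \<subseteq> span P L I")
    case True
    then have "span P L I = P" using span_subset_span[of S I] span_subset_P[OF IP] S IP by blast
    then show ?thesis using less.prems unfolding is_base_def by (intro exI[of _ "{}"]) simp
  next
    case False
    then obtain s where s: "s \<in> S" "s \<notin> span P L I" by blast
    then have "s \<notin> I" using span_superset IP by blast
    have "card (S - insert s I) < card (S - I)"
      using s \<open>s \<notin> I\<close> S(1) by (metis Diff_insert card_Diff1_less finite_Diff DiffI)
    from less.hyps[OF this independent_insert[OF less.prems]] s S(2) obtain Y
      where Y: "Y \<subseteq> S" "Y \<inter> insert s I = {}" "is_base P L P (insert s I \<union> Y)"
      by blast
    then have "insert s Y \<subseteq> S" "insert s Y \<inter> I = {}" "I \<union> insert s Y = insert s I \<union> Y"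
      using s \<open>s \<notin> I\<close> by blast+
    with Y(3) show ?thesis by metis
  qed
qed

lemma exists_base_exchanging_point:
  assumes P2: "axiom_P2 L" and B: "is_base P L P B" and b: "b \<in> B"
    and s: "s1 \<in> B" "s2 \<in> B" "s1 \<noteq> b" "s2 \<noteq> b" "s1 \<noteq> s2"
  obtains C where "is_base P L P C" "lines_of P L B \<inter> lines_of P L C = lines_of P L (B - {b})"
proof -
  have indB: "independent P L B" using B unfolding is_base_def by blast
  obtain p where p: "p \<in> P" "p \<notin> span P L (B - {b})" "\<forall>l\<in>star P L B b. p \<notin> l"
    using exists_point_off_star[OF P2 indB b s] by blast
  have "span P L {b, s1} \<in> star P L B b" unfolding star_def using s by blast
  moreover have "b \<in> span P L {b, s1}"
    using span_superset[of "{b, s1}"] independent_subset_P[OF indB] b s(1) by blast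
  ultimately have "p \<noteq> b" using p(3) by blast
  moreover have "p \<notin> B - {b}" using p(2) span_superset[of "B - {b}"] independent_subset_P[OF indB] by blast
  ultimately have "p \<notin> B" by blast
  have C: "is_base P L P (insert p (B - {b}))" using base_exchange[OF B b p(1,2)] .
  then have "independent P L (insert p (B - {b}))" unfolding is_base_def by blast
  from C common_lines_after_exchange[OF indB b this \<open>p \<notin> B\<close> p(3)] show ?thesis by (rule that)
qed

end

lemma choose_two_sum_less:
  fixes n d e :: nat
  assumes "4 \<le> n" "d + e = Suc n" "2 \<le> e"
  shows "(d choose 2) + e < n choose 2"
proof -
  have double: "2 * (k choose 2) = k * (k - 1)" for k :: nat
    by (induction k) (auto simp: numeral_2_eq_2 algebra_simps split: if_splits)
  obtain m where m: "n = m + 4" using assms(1) by (metis add.commute le_Suc_ex)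
  have d: "d \<le> m + 3" using assms m by linarith
  have "d * (d - 1) \<le> d * (m + 2)" using d by (intro mult_le_mono2) linarith
  moreover have "d * m \<le> (m + 3) * m" using d by (intro mult_le_mono1) linarith
  moreover have "n * (n - 1) = (m + 3) * m + 4 * (m + 3)" unfolding m by (simp add: algebra_simps)
  ultimately have "d * (d - 1) + 2 * e < n * (n - 1)" using assms(2) m by (simp add: algebra_simps)
  then show ?thesis using double[of n] double[of d] by linarith
qed

locale ndim_linspace = exchange_linspace +
  fixes n :: nat
  assumes dim: "is_dim P L P n"
begin

lemma spanning_set:
  obtains S where "finite S" "S \<subseteq> P" "card S = Suc n" "span P L S = P"
proof -
  obtain S where S: "S \<subseteq> P" "card S = Suc n" "span P L S = P"
    using dim unfolding is_dim_def by auto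
  then have "finite S" by (intro card_ge_0_finite) simp
  with S that show ?thesis by blast
qed

lemma independent_finite_card:
  assumes "independent P L I" shows "finite I" "card I \<le> Suc n"
proof -
  obtain S where S: "finite S" "S \<subseteq> P" "card S = Suc n" "span P L S = P"
    using spanning_set by blast
  show "finite I"
  proof (rule ccontr)
    assume "infinite I"
    then obtain F where F: "F \<subseteq> I" "finite F" "card F = Suc (Suc n)"
      using infinite_arbitrarily_large by blast
    then have "card F \<le> card S"
      using independent_card_le_spanning[OF S(1,2,4)] independent_mono assms by blast
    with F S show False by simp
  qed
  then show "card I \<le> Suc n" using independent_card_le_spanning[OF S(1,2,4)] assms S by simp
qed

lemma base_finite_card:
  assumes "is_base P L P B" shows "finite B" "card B = Suc n"
proof -
  have indep: "independent P L B" and spans: "span P L B = P"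
    using assms unfolding is_base_def by blast+
  show "finite B" using independent_finite_card(1)[OF indep] .
  moreover have "\<forall>X. finite X \<and> X \<subseteq> P \<and> span P L X = P \<longrightarrow> n + 1 \<le> card X"
    using dim unfolding is_dim_def by blast
  then have "Suc n \<le> card B" using \<open>finite B\<close> independent_subset_P[OF indep] spans by simp
  ultimately show "card B = Suc n" using independent_finite_card(2)[OF indep] by simp
qed

lemma independent_subset_base:
  assumes "independent P L I" obtains B where "is_base P L P B" "I \<subseteq> B"
proof -
  obtain S where S: "finite S" "S \<subseteq> P" "card S = Suc n" "span P L S = P" by (rule spanning_set)
  obtain Y where "is_base P L P (I \<union> Y)" using independent_extend_to_base[OF S(1,2,4) assms] by blast
  then show ?thesis by (rule that) blast
qed

lemma base_two_other_points:
  assumes "2 \<le> n" "is_base P L P B" "b \<in> B"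
  obtains s1 s2 where "s1 \<in> B" "s2 \<in> B" "s1 \<noteq> b" "s2 \<noteq> b" "s1 \<noteq> s2"
proof -
  have "card (B - {b}) = n" using base_finite_card[OF assms(2)] assms(3) by simp
  with assms(1) obtain T where "T \<subseteq> B - {b}" "card T = 2"
    by (metis obtain_subset_with_card_n)
  then show ?thesis using that unfolding card_2_iff by blast
qed

lemma base_through_pair_meeting_base:
  assumes n: "3 \<le> n" and B: "is_base P L P B" and p: "p \<in> B" and q: "q \<in> P" "q \<noteq> p"
  obtains C r1 r2 where "is_base P L P C" "{p, q, r1, r2} \<subseteq> C" "r1 \<in> B" "r2 \<in> B" "r1 \<noteq> r2"
    "r1 \<notin> {p, q}" "r2 \<notin> {p, q}"
proof -
  have BP: "B \<subseteq> P" and spanB: "span P L B = P" using B independent_subset_P unfolding is_base_def by blast+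
  have "p \<in> P" using BP p by blast
  then have "independent P L {p, q}" using independent_pair q by blast
  then have "\<exists>Y\<subseteq>B. Y \<inter> {p, q} = {} \<and> is_base P L P ({p, q} \<union> Y)"
    by (rule independent_extend_to_base[OF base_finite_card(1)[OF B] BP spanB])
  then obtain Y where Y: "Y \<subseteq> B" "Y \<inter> {p, q} = {}" "is_base P L P ({p, q} \<union> Y)" by blast
  have "finite Y" using Y(1) base_finite_card(1)[OF B] finite_subset by blast
  then have "card ({p, q} \<union> Y) = 2 + card Y" using Y(2) q(2) by (simp add: card_Un_disjoint)
  then have "2 \<le> card Y" using base_finite_card(2)[OF Y(3)] n by simp
  then obtain T where "T \<subseteq> Y" "card T = 2" by (metis obtain_subset_with_card_n)
  then obtain r1 r2 where "r1 \<in> Y" "r2 \<in> Y" "r1 \<noteq> r2" unfolding card_2_iff by blast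
  with Y show ?thesis using that[of "{p, q} \<union> Y" r1 r2] by blast
qed

lemma card_common_lines_le:
  assumes B: "independent P L B" and C: "independent P L C"
  shows "card (lines_of P L B \<inter> lines_of P L C) \<le> (card (B \<inter> C) choose 2) + card (B - C)"
proof -
  define through where "through x = {l \<in> lines_of P L C. x \<in> l}" for x
  have fin: "finite B" "finite C" using independent_finite_card(1) B C by blast+
  have cover: "lines_of P L B \<inter> lines_of P L C \<subseteq> lines_of P L (B \<inter> C) \<union> (\<Union>x\<in>B - C. through x)"
  proof
    fix l assume l: "l \<in> lines_of P L B \<inter> lines_of P L C"
    then obtain x y where xy: "x \<in> B" "y \<in> B" "x \<noteq> y" "l = span P L {x, y}"
      using mem_lines_of by blast
    then have "x \<in> l" "y \<in> l" using span_superset[of "{x, y}"] independent_subset_P[OF B] by auto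
    show "l \<in> lines_of P L (B \<inter> C) \<union> (\<Union>x\<in>B - C. through x)"
    proof (cases "x \<in> C \<and> y \<in> C")
      case True
      then have "l \<in> lines_of P L (B \<inter> C)" using xy mem_lines_of[of l "B \<inter> C"] by blast
      then show ?thesis by blast
    next
      case False
      then have "x \<in> B - C \<or> y \<in> B - C" using xy by blast
      then show ?thesis using \<open>x \<in> l\<close> \<open>y \<in> l\<close> l unfolding through_def by blast
    qed
  qed
  have fin_through: "finite (\<Union>x\<in>B - C. through x)"
    using fin finite_lines_of[of C] unfolding through_def by simp
  have "card (\<Union>x\<in>B - C. through x) \<le> (\<Sum>x\<in>B - C. card (through x))"
    using card_UN_le fin(1) by blast
  also have "\<dots> \<le> card (B - C)"
    using sum_mono[of "B - C" "\<lambda>x. card (through x)" "\<lambda>_. 1"] card_lines_of_through_le_one[OF C]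
    unfolding through_def by simp
  finally have through_le: "card (\<Union>x\<in>B - C. through x) \<le> card (B - C)" .
  have "card (lines_of P L B \<inter> lines_of P L C) \<le> card (lines_of P L (B \<inter> C) \<union> (\<Union>x\<in>B - C. through x))"
    using card_mono[OF _ cover] finite_lines_of fin fin_through by simp
  also have "\<dots> \<le> card (lines_of P L (B \<inter> C)) + card (\<Union>x\<in>B - C. through x)"
    by (rule card_Un_le)
  also have "\<dots> \<le> (card (B \<inter> C) choose 2) + card (B - C)"
    using card_lines_of[OF independent_mono[OF B]] fin through_le by simp
  finally show ?thesis .
qed

lemma common_lines_of_bases:
  assumes n: "4 \<le> n" and B: "is_base P L P B" and C: "is_base P L P C"
    and ne: "lines_of P L B \<noteq> lines_of P L C"
    and card_common: "card (lines_of P L B \<inter> lines_of P L C) = n choose 2"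
  obtains b where "b \<in> B" "lines_of P L B \<inter> lines_of P L C = lines_of P L (B - {b})"
proof -
  have indB: "independent P L B" and indC: "independent P L C"
    using B C unfolding is_base_def by blast+
  have cardB: "finite B" "card B = Suc n" using base_finite_card[OF B] by simp_all
  have cardC: "finite C" "card C = Suc n" using base_finite_card[OF C] by simp_all
  have split: "card (B \<inter> C) + card (B - C) = Suc n"
    using card_Int_Diff[OF cardB(1), of C] cardB(2) by linarith
  have "B - C \<noteq> {}"
  proof
    assume "B - C = {}"
    then have "B \<subseteq> C" by blast
    then have "B = C" using card_subset_eq[OF cardC(1)] cardB(2) cardC(2) by simp
    with ne show False by simp
  qed
  then have "1 \<le> card (B - C)" using cardB(1) by (simp add: Suc_leI card_gt_0_iff)
  moreover have "\<not> 2 \<le> card (B - C)"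
    using choose_two_sum_less[OF n split] card_common_lines_le[OF indB indC] card_common by linarith
  ultimately have "card (B - C) = 1" by linarith
  then obtain b where b: "B - C = {b}" by (rule card_1_singletonE)
  then have "B \<inter> C = B - {b}" by blast
  then have "lines_of P L (B - {b}) \<subseteq> lines_of P L B \<inter> lines_of P L C"
    using lines_of_mono[of "B - {b}" C] lines_of_mono[of "B - {b}" B] by blast
  moreover have "card (lines_of P L (B - {b})) = n choose 2"
  proof -
    have "b \<in> B" using b by blast
    then have "card (B - {b}) = n" using cardB by simp
    then show ?thesis using card_lines_of[OF independent_mono[OF indB]] cardB(1) by simp
  qed
  moreover have "finite (lines_of P L B \<inter> lines_of P L C)" using finite_lines_of cardB(1) by blast
  ultimately have "lines_of P L B \<inter> lines_of P L C = lines_of P L (B - {b})"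
    using card_subset_eq card_common by metis
  with b that show ?thesis by blast
qed

end

locale base_preserving_line_map =
  src: ndim_linspace P L n + tgt: ndim_linspace P' L' n
  for P :: "'a set" and L :: "'a set set" and P' :: "'b set" and L' :: "'b set set" and n :: nat +
  fixes f :: "'a set \<Rightarrow> 'b set"
  assumes n: "4 \<le> n" and P2: "axiom_P2 L"
    and inj_f: "inj_on f L" and f_lines: "f ` L \<subseteq> L'"
    and f_base_subsets: "\<forall>B. is_base P L P B \<longrightarrow>
      (\<exists>B'. is_base P' L' P' B' \<and> f ` base_subset P L 1 B = base_subset P' L' 1 B')"
begin

lemma f_lines_of_base:
  assumes B: "is_base P L P B"
  obtains B' where "is_base P' L' P' B'" "f ` lines_of P L B = lines_of P' L' B'"
proof -
  obtain B' where B': "is_base P' L' P' B'" "f ` base_subset P L 1 B = base_subset P' L' 1 B'"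
    using f_base_subsets B by blast
  have "base_subset P L 1 B = lines_of P L B" "base_subset P' L' 1 B' = lines_of P' L' B'"
    using src.base_subset_1_eq_lines_of tgt.base_subset_1_eq_lines_of B B'(1)
    unfolding is_base_def by blast+
  with B' that show ?thesis by simp
qed

lemma lines_of_base_subset_lines: "is_base P L P B \<Longrightarrow> lines_of P L B \<subseteq> L"
  using src.lines_of_subset_lines src.independent_subset_P unfolding is_base_def by blast

lemma f_lines_of_minus_point:
  assumes B: "is_base P L P B" and b: "b \<in> B"
    and B': "is_base P' L' P' B'" and fB: "f ` lines_of P L B = lines_of P' L' B'"
  obtains b' where "b' \<in> B'" "f ` lines_of P L (B - {b}) = lines_of P' L' (B' - {b'})"
proof -
  have "2 \<le> n" using n by simp
  then obtain s1 s2 where s: "s1 \<in> B" "s2 \<in> B" "s1 \<noteq> b" "s2 \<noteq> b" "s1 \<noteq> s2"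
    by (rule src.base_two_other_points[OF _ B b])
  obtain C where C: "is_base P L P C" "lines_of P L B \<inter> lines_of P L C = lines_of P L (B - {b})"
    by (rule src.exists_base_exchanging_point[OF P2 B b s])
  obtain C' where C': "is_base P' L' P' C'" "f ` lines_of P L C = lines_of P' L' C'"
    by (rule f_lines_of_base[OF C(1)])
  have indB: "independent P L B" using B unfolding is_base_def by blast
  have lines: "lines_of P L B \<subseteq> L" "lines_of P L C \<subseteq> L"
    using lines_of_base_subset_lines[OF B] lines_of_base_subset_lines[OF C(1)] by simp_all
  have common: "lines_of P' L' B' \<inter> lines_of P' L' C' = f ` lines_of P L (B - {b})"
    using inj_on_image_Int[OF inj_f lines] fB C'(2) C(2) by simp
  have "card (f ` lines_of P L (B - {b})) = card (lines_of P L (B - {b}))"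
    using card_image[OF inj_on_subset[OF inj_f]] lines(1) C(2) by blast
  also have "\<dots> = n choose 2"
    using src.card_lines_of[OF src.independent_mono[OF indB]] src.base_finite_card[OF B] b by simp
  finally have card_common: "card (lines_of P' L' B' \<inter> lines_of P' L' C') = n choose 2"
    using common by simp
  have "lines_of P' L' B' \<noteq> lines_of P' L' C'"
  proof
    assume "lines_of P' L' B' = lines_of P' L' C'"
    then have "lines_of P L B = lines_of P L (B - {b})"
      using fB C' C(2) inj_on_image_eq_iff[OF inj_f lines] by simp
    moreover have "star P L B b \<noteq> {}" unfolding star_def using s by blast
    ultimately show False using src.lines_of_diff_eq_star[OF indB b] by simp
  qed
  then obtain b' where "b' \<in> B'" "lines_of P' L' B' \<inter> lines_of P' L' C' = lines_of P' L' (B' - {b'})"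
    by (rule tgt.common_lines_of_bases[OF n B' C'(1) _ card_common])
  with common show ?thesis using that by simp
qed

lemma f_star:
  assumes B: "is_base P L P B" and b: "b \<in> B"
    and B': "is_base P' L' P' B'" and fB: "f ` lines_of P L B = lines_of P' L' B'"
  obtains b' where "b' \<in> B'" "f ` star P L B b = star P' L' B' b'"
proof -
  obtain b' where b': "b' \<in> B'" "f ` lines_of P L (B - {b}) = lines_of P' L' (B' - {b'})"
    by (rule f_lines_of_minus_point[OF B b B' fB])
  have indB: "independent P L B" using B unfolding is_base_def by blast
  have "lines_of P L (B - {b}) \<subseteq> L"
    using lines_of_base_subset_lines[OF B] src.lines_of_mono[of "B - {b}" B] by blast
  then have "f ` star P L B b = f ` lines_of P L B - f ` lines_of P L (B - {b})"
    using src.lines_of_diff_eq_star[OF indB b] inj_on_image_set_diff[OF inj_f]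
      lines_of_base_subset_lines[OF B] by (metis Diff_subset subset_trans)
  also have "\<dots> = star P' L' B' b'"
    using fB b' tgt.lines_of_diff_eq_star B' unfolding is_base_def by simp
  finally show ?thesis using b'(1) by (rule that[rotated])
qed

lemma image_base_lines_meet_once:
  assumes C: "independent P L C" and pr: "p \<in> C" "r1 \<in> C" "r2 \<in> C" "r1 \<noteq> p" "r2 \<noteq> p" "r1 \<noteq> r2"
    and x: "x \<in> f (span P L {p, r1})" "x \<in> f (span P L {p, r2})"
    and y: "y \<in> f (span P L {p, r1})" "y \<in> f (span P L {p, r2})"
  shows "x = y"
proof -
  have CP: "C \<subseteq> P" using src.independent_subset_P[OF C] .
  have lines: "span P L {p, r1} \<in> L" "span P L {p, r2} \<in> L"
    using src.span_pair_in_lines CP pr by auto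
  have "span P L {p, r1} \<noteq> span P L {p, r2}"
    using src.independent_span_pair_inj[OF C, of "{p, r1}" "{p, r2}"] pr by auto
  then have "f (span P L {p, r1}) \<noteq> f (span P L {p, r2})"
    using inj_f lines unfolding inj_on_def by blast
  moreover have "f (span P L {p, r1}) \<in> L'" "f (span P L {p, r2}) \<in> L'" using f_lines lines by blast+
  ultimately show ?thesis using tgt.lines_meet_once x y by blast
qed

lemma star_center_on_image:
  assumes B': "is_base P' L' P' B'" and b': "b' \<in> B'"
    and st: "f ` star P L B b = star P' L' B' b'" and s: "s \<in> B" "s \<noteq> b"
  shows "b' \<in> f (span P L {b, s})"
proof -
  have "f (span P L {b, s}) \<in> star P' L' B' b'" using st s unfolding star_def by blast
  then obtain t where "t \<in> B'" "f (span P L {b, s}) = span P' L' {b', t}" unfolding star_def by blast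
  moreover have "B' \<subseteq> P'" using B' tgt.independent_subset_P unfolding is_base_def by blast
  ultimately show ?thesis using tgt.span_superset[of "{b', t}"] b' by auto
qed

lemma star_image_concurrent:
  assumes B: "is_base P L P B" and b: "b \<in> B"
  obtains c where "\<And>s. s \<in> B \<Longrightarrow> s \<noteq> b \<Longrightarrow> c \<in> f (span P L {b, s})"
proof -
  obtain B' where B': "is_base P' L' P' B'" "f ` lines_of P L B = lines_of P' L' B'"
    by (rule f_lines_of_base[OF B])
  obtain b' where b': "b' \<in> B'" "f ` star P L B b = star P' L' B' b'"
    by (rule f_star[OF B b B'])
  show ?thesis
  proof (rule that)
    fix s assume "s \<in> B" "s \<noteq> b"
    then show "b' \<in> f (span P L {b, s})" by (rule star_center_on_image[OF B'(1) b'])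
  qed
qed

lemma lines_through_point_concurrent:
  assumes p: "p \<in> P" shows "\<exists>x. \<forall>l\<in>L. p \<in> l \<longrightarrow> x \<in> f l"
proof -
  obtain B where B: "is_base P L P B" "{p} \<subseteq> B"
    by (rule src.independent_subset_base[OF src.independent_singleton[OF p]])
  obtain c where c: "\<And>s. s \<in> B \<Longrightarrow> s \<noteq> p \<Longrightarrow> c \<in> f (span P L {p, s})"
    using star_image_concurrent[OF B(1)] B(2) by blast
  have "c \<in> f l" if l: "l \<in> L" "p \<in> l" for l
  proof -
    obtain q where q: "q \<in> l" "q \<noteq> p" using src.line_two_points[OF l(1)] by metis
    then have "q \<in> P" using src.line_subset l(1) by blast
    have "3 \<le> n" using n by simp
    \<comment> \<open>A base through p and q shares two further points r1, r2 with B; the image lines of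
        p r1 and p r2 meet only once, so both bases yield the same point on them.\<close>
    obtain C r1 r2 where C: "is_base P L P C" "{p, q, r1, r2} \<subseteq> C" "r1 \<in> B" "r2 \<in> B"
      "r1 \<noteq> r2" "r1 \<notin> {p, q}" "r2 \<notin> {p, q}"
      using src.base_through_pair_meeting_base[OF \<open>3 \<le> n\<close> B(1) _ \<open>q \<in> P\<close> q(2)] B(2) by blast
    obtain c' where c': "\<And>s. s \<in> C \<Longrightarrow> s \<noteq> p \<Longrightarrow> c' \<in> f (span P L {p, s})"
      using star_image_concurrent[OF C(1)] C(2) by blast
    have indC: "independent P L C" using C(1) unfolding is_base_def by blast
    have "c' = c"
      using image_base_lines_meet_once[OF indC, of p r1 r2 c' c] c' c C(2-7) by auto
    moreover have "span P L {p, q} = l" using src.span_pair_line[OF l(1) l(2) q(1)] q(2) by simp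
    ultimately show ?thesis using c'[of q] C(2) q(2) by blast
  qed
  then show ?thesis by blast
qed

definition point_map :: "'a \<Rightarrow> 'b" where
  "point_map p = (SOME x. \<forall>l\<in>L. p \<in> l \<longrightarrow> x \<in> f l)"

lemma point_map_in_image:
  assumes "p \<in> P" "l \<in> L" "p \<in> l" shows "point_map p \<in> f l"
  using someI_ex[OF lines_through_point_concurrent[OF assms(1)]] assms(2,3)
  unfolding point_map_def by blast

lemma point_map_star:
  assumes B: "is_base P L P B" and b: "b \<in> B"
    and B': "is_base P' L' P' B'" and fB: "f ` lines_of P L B = lines_of P' L' B'"
  shows "point_map b \<in> B'" "f ` star P L B b = star P' L' B' (point_map b)"
proof -
  obtain b' where b': "b' \<in> B'" "f ` star P L B b = star P' L' B' b'"
    by (rule f_star[OF B b B' fB])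
  have "2 \<le> n" using n by simp
  then obtain s1 s2 where s: "s1 \<in> B" "s2 \<in> B" "s1 \<noteq> b" "s2 \<noteq> b" "s1 \<noteq> s2"
    by (rule src.base_two_other_points[OF _ B b])
  have indB: "independent P L B" using B unfolding is_base_def by blast
  have BP: "B \<subseteq> P" using src.independent_subset_P[OF indB] .
  have "b \<in> P" "s1 \<in> P" "s2 \<in> P" using BP b s by blast+
  then have "point_map b \<in> f (span P L {b, s1})" "point_map b \<in> f (span P L {b, s2})"
    using point_map_in_image src.span_pair_in_lines src.span_superset[of "{b, s1}"]
      src.span_superset[of "{b, s2}"] s by auto
  moreover have "b' \<in> f (span P L {b, s1})" "b' \<in> f (span P L {b, s2})"
    using star_center_on_image[OF B' b'] s by blast+
  ultimately have "point_map b = b'" using image_base_lines_meet_once[OF indB b s(1,2,3,4,5)] by blast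
  with b' show "point_map b \<in> B'" "f ` star P L B b = star P' L' B' (point_map b)" by simp_all
qed

lemma point_map_base:
  assumes B: "is_base P L P B" obtains B' where "is_base P' L' P' B'" "point_map ` B \<subseteq> B'"
proof -
  obtain B' where B': "is_base P' L' P' B'" "f ` lines_of P L B = lines_of P' L' B'"
    by (rule f_lines_of_base[OF B])
  have "point_map ` B \<subseteq> B'" using point_map_star(1)[OF B _ B'(1,2)] by blast
  with B'(1) show ?thesis by (rule that)
qed

lemma point_map_independent:
  assumes "independent P L X" shows "independent P' L' (point_map ` X)"
proof -
  obtain B where B: "is_base P L P B" "X \<subseteq> B" by (rule src.independent_subset_base[OF assms])
  obtain B' where B': "is_base P' L' P' B'" "point_map ` B \<subseteq> B'" by (rule point_map_base[OF B(1)])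
  have "independent P' L' B'" using B'(1) unfolding is_base_def by blast
  moreover have "point_map ` X \<subseteq> B'" using B(2) B'(2) by blast
  ultimately show ?thesis by (rule tgt.independent_mono)
qed

lemma point_map_in_points: "p \<in> P \<Longrightarrow> point_map p \<in> P'"
  using tgt.independent_subset_P[OF point_map_independent[OF src.independent_singleton]] by simp

lemma point_map_inj: "inj_on point_map P"
proof (rule inj_onI)
  fix p q assume p: "p \<in> P" and q: "q \<in> P" and eq: "point_map p = point_map q"
  show "p = q"
  proof (rule ccontr)
    assume "p \<noteq> q"
    obtain C where C: "is_base P L P C" "{p, q} \<subseteq> C"
      by (rule src.independent_subset_base[OF src.independent_pair[OF p q \<open>p \<noteq> q\<close>]])
    obtain C' where C': "is_base P' L' P' C'" "f ` lines_of P L C = lines_of P' L' C'"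
      by (rule f_lines_of_base[OF C(1)])
    have indC: "independent P L C" using C(1) unfolding is_base_def by blast
    have pq: "p \<in> C" "q \<in> C" using C(2) by blast+
    have images: "f ` star P L C p = f ` star P L C q"
      using point_map_star(2)[OF C(1) pq(1) C'] point_map_star(2)[OF C(1) pq(2) C'] eq by simp
    have "star P L C p \<subseteq> L" "star P L C q \<subseteq> L"
      using src.lines_of_diff_eq_star[OF indC pq(1)] src.lines_of_diff_eq_star[OF indC pq(2)]
        lines_of_base_subset_lines[OF C(1)] by blast+
    then have stars: "star P L C p = star P L C q" using inj_on_image_eq_iff[OF inj_f] images by simp
    have "2 \<le> n" using n by simp
    then obtain s1 s2 where "s1 \<in> C" "s2 \<in> C" "s1 \<noteq> p" "s2 \<noteq> p" "s1 \<noteq> s2"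
      by (rule src.base_two_other_points[OF _ C(1) pq(1)])
    then obtain r where "r \<in> C" "r \<noteq> p" "r \<noteq> q" by metis
    with src.star_eq_imp_eq[OF indC pq this stars] \<open>p \<noteq> q\<close> show False by blast
  qed
qed

lemma f_eq_span_image:
  assumes l: "l \<in> L" shows "f l = span P' L' (point_map ` l)"
proof
  have lP: "l \<subseteq> P" using src.line_subset[OF l] .
  have sub: "point_map ` l \<subseteq> f l" using point_map_in_image lP l by blast
  have fl: "f l \<in> L'" using f_lines l by blast
  show "span P' L' (point_map ` l) \<subseteq> f l" using tgt.span_minimal[OF tgt.subspace_line[OF fl] sub] .
  obtain u v where uv: "u \<in> l" "v \<in> l" "u \<noteq> v" using src.line_two_points[OF l] by blast
  then have "point_map u \<noteq> point_map v" using point_map_inj lP unfolding inj_on_def by blast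
  then have "span P' L' {point_map u, point_map v} = f l"
    using tgt.span_pair_line[OF fl] sub uv by blast
  moreover have "point_map ` l \<subseteq> P'" using point_map_in_points lP by blast
  ultimately show "f l \<subseteq> span P' L' (point_map ` l)"
    using tgt.span_mono[of "{point_map u, point_map v}" "point_map ` l"] uv by blast
qed

lemma point_map_strong_embedding: "strong_embedding P L P' L' point_map"
proof -
  have "collinear_in L' {point_map x, point_map y, point_map z}"
    if xyz: "x \<in> P" "y \<in> P" "z \<in> P" and col: "collinear_in L {x, y, z}" for x y z
  proof -
    obtain l where "l \<in> L" "{x, y, z} \<subseteq> l" using col unfolding collinear_in_def by blast
    then have "{point_map x, point_map y, point_map z} \<subseteq> f l" using point_map_in_image xyz by blast
    then show ?thesis using f_lines \<open>l \<in> L\<close> unfolding collinear_in_def by blast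
  qed
  moreover have "\<not> collinear_in L' {point_map x, point_map y, point_map z}"
    if "x \<in> P" "y \<in> P" "z \<in> P" "x \<noteq> y" "x \<noteq> z" "y \<noteq> z" "\<not> collinear_in L {x, y, z}"
    for x y z
  proof -
    have "independent P L {x, y, z}" using src.independent_iff_not_collinear that by blast
    then have "independent P' L' {point_map x, point_map y, point_map z}"
      using point_map_independent[of "{x, y, z}"] by simp
    moreover have "point_map x \<noteq> point_map y" "point_map x \<noteq> point_map z" "point_map y \<noteq> point_map z"
      using point_map_inj that unfolding inj_on_def by blast+
    ultimately show ?thesis using tgt.independent_iff_not_collinear point_map_in_points that(1-3) by blast
  qed
  ultimately show ?thesis
    unfolding strong_embedding_def using point_map_inj point_map_in_points point_map_independent by blast
qed

end

theorem theorem2p3: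
  fixes P :: "'a set" and L :: "'a set set"
    and P' :: "'b set" and L' :: "'b set set"
    and f :: "'a set \<Rightarrow> 'b set" and n :: nat
  assumes "linear_space P L" and "linear_space P' L'"
    and "is_dim P L P n" and "is_dim P' L' P' n" and "n \<ge> 4"
    and "exchange_axiom P L" and "exchange_axiom P' L'"
    and "axiom_P2 L" and "axiom_P2 L'"
    and "inj_on f L" and "f ` L \<subseteq> L'"
    and "\<forall>B. is_base P L P B \<longrightarrow>
           (\<exists>B'. is_base P' L' P' B' \<and> f ` base_subset P L 1 B = base_subset P' L' 1 B')"
  shows "\<exists>g. strong_embedding P L P' L' g \<and> (\<forall>l\<in>L. f l = span P' L' (g ` l))"
proof -
  \<comment> \<open>Axiom (P2) is only needed in the source space.\<close>
  interpret base_preserving_line_map P L P' L' n f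
    by unfold_locales (use assms in auto)
  show ?thesis using point_map_strong_embedding f_eq_span_image by blast
qed

end
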